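(* Let $G$ be a classical subgroup of $\mathrm{GL}(N+1,\mathbb{C})$ (for instance $G=\mathrm{SL}(N+1,\mathbb{C})$), let $V$ and $W$ be finite-dimensional rational complex representations of $G$ equipped with Hermitian norms $\|\cdot\|$, and let $v\in V\setminus\{0\}$, $w\in W\setminus\{0\}$. Define $p_{v,w}(\sigma)=\log\|\sigma(w)\|^2-\log\|\sigma(v)\|^2$ for $\sigma\in G$. Then $$\inf_{\sigma\in G}p_{v,w}(\sigma)=\log\tan^2 d\big(\overline{G[v,w]},\,\overline{G[v,0]}\big),$$ where $d$ is the distance function of the Fubini–Study metric on $\mathbb{P}(V\oplus W)$ and $d(A,B)$ denotes the distance between the sets $A$ and $B$.
   Context: The Hermitian norms on $V$ and $W$ induce a Hermitian inner product $(\cdot,\cdot)$ on $V\oplus W$ (orthogonal direct sum), and the Fubini–Study distance on $\mathbb{P}(V\oplus W)$ is given by $\cos d([u],[u'])=|(u,u')|/(\|u\|\,\|u'\|)$. Here $[v,w]$ denotes the point of $\mathbb{P}(V\oplus W)$ determined by $(v,w)$, $[v,0]$ the point determined by $(v,0)$, and $\overline{G[v,w]}$, $\overline{G[v,0]}$ are the closures of their $G$-orbits in $\mathbb{P}(V\oplus W)$. *)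

theory Defs
  imports "HOL-Analysis.Analysis"
begin

text \<open>Matrices are complex^'k^'k with CARD('k) = N+1.\<close>

definition GLc :: "(complex^'k^'k) set" where
  "GLc = {A. det A \<noteq> 0}"

definition SLc :: "(complex^'k^'k) set" where
  "SLc = {A. det A = 1}"

definition SOc :: "(complex^'k^'k) set" where
  "SOc = {A. transpose A ** A = mat 1 \<and> det A = 1}"

text \<open>Symplectic group of a nondegenerate alternating form J (all such are conjugate
  to the standard one).\<close>
definition Spc :: "complex^'k^'k \<Rightarrow> (complex^'k^'k) set" where
  "Spc J = {A. transpose A ** J ** A = J}"

definition classical_subgroup :: "(complex^'k^'k) set \<Rightarrow> bool" where
  "classical_subgroup G \<longleftrightarrow>
     G = GLc \<or> G = SLc \<or> G = SOc \<or>
     (\<exists>J. transpose J = - J \<and> det J \<noteq> 0 \<and> G = Spc J)"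

inductive_set poly_fun :: "(complex^'k^'k \<Rightarrow> complex) set" where
  const: "(\<lambda>A. c) \<in> poly_fun"
| entry: "(\<lambda>A. A $ i $ j) \<in> poly_fun"
| add: "f \<in> poly_fun \<Longrightarrow> g \<in> poly_fun \<Longrightarrow> (\<lambda>A. f A + g A) \<in> poly_fun"
| mult: "f \<in> poly_fun \<Longrightarrow> g \<in> poly_fun \<Longrightarrow> (\<lambda>A. f A * g A) \<in> poly_fun"

text \<open>A rational representation of G on complex^'n: a group homomorphism G -> GL(V)
  whose matrix entries are regular functions, i.e. polynomials in the entries of g
  divided by a power of det g.\<close>
definition rational_rep ::
  "(complex^'k^'k) set \<Rightarrow> (complex^'k^'k \<Rightarrow> complex^'n^'n) \<Rightarrow> bool" where
  "rational_rep G \<rho> \<longleftrightarrow>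
     \<rho> (mat 1) = mat 1 \<and>
     (\<forall>g\<in>G. \<forall>h\<in>G. \<rho> (g ** h) = \<rho> g ** \<rho> h) \<and>
     (\<forall>i j. \<exists>p\<in>poly_fun. \<exists>m::nat. \<forall>g\<in>G. \<rho> g $ i $ j = p g / (det g) ^ m)"

definition herm :: "complex^'n^'n \<Rightarrow> complex^'n \<Rightarrow> complex^'n \<Rightarrow> complex" where
  "herm H x y = (\<Sum>i\<in>UNIV. \<Sum>j\<in>UNIV. cnj (x $ i) * H $ i $ j * y $ j)"

definition pos_def_hermitian :: "complex^'n^'n \<Rightarrow> bool" where
  "pos_def_hermitian H \<longleftrightarrow>
     (\<forall>i j. H $ i $ j = cnj (H $ j $ i)) \<and> (\<forall>x. x \<noteq> 0 \<longrightarrow> Re (herm H x x) > 0)"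

definition hnormsq :: "complex^'n^'n \<Rightarrow> complex^'n \<Rightarrow> real" where
  "hnormsq H x = Re (herm H x x)"

text \<open>Points of P(V+W) are represented by nonzero vectors (v,w).  The inner product on
  the orthogonal direct sum.\<close>
definition sum_ip :: "complex^'n^'n \<Rightarrow> complex^'m^'m \<Rightarrow>
    ((complex^'n) \<times> (complex^'m)) \<Rightarrow> ((complex^'n) \<times> (complex^'m)) \<Rightarrow> complex" where
  "sum_ip HV HW u u' = herm HV (fst u) (fst u') + herm HW (snd u) (snd u')"

definition fs_dist :: "complex^'n^'n \<Rightarrow> complex^'m^'m \<Rightarrow>
    ((complex^'n) \<times> (complex^'m)) \<Rightarrow> ((complex^'n) \<times> (complex^'m)) \<Rightarrow> real" where
  "fs_dist HV HW u u' =
     arccos (cmod (sum_ip HV HW u u') /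
             (sqrt (Re (sum_ip HV HW u u)) * sqrt (Re (sum_ip HV HW u' u'))))"

text \<open>Closure in P(V+W) (w.r.t. the Fubini--Study metric, which induces the usual
  topology) of a set of nonzero representatives.\<close>
definition proj_closure :: "complex^'n^'n \<Rightarrow> complex^'m^'m \<Rightarrow>
    ((complex^'n) \<times> (complex^'m)) set \<Rightarrow> ((complex^'n) \<times> (complex^'m)) set" where
  "proj_closure HV HW S =
     {u. u \<noteq> 0 \<and> (\<forall>e>0. \<exists>a\<in>S. fs_dist HV HW u a < e)}"

definition fs_setdist :: "complex^'n^'n \<Rightarrow> complex^'m^'m \<Rightarrow>
    ((complex^'n) \<times> (complex^'m)) set \<Rightarrow> ((complex^'n) \<times> (complex^'m)) set \<Rightarrow> real" where
  "fs_setdist HV HW A B = Inf {fs_dist HV HW a b | a b. a \<in> A \<and> b \<in> B}"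

definition orbit_pair :: "(complex^'k^'k) set \<Rightarrow> (complex^'k^'k \<Rightarrow> complex^'n^'n) \<Rightarrow>
    (complex^'k^'k \<Rightarrow> complex^'m^'m) \<Rightarrow> complex^'n \<Rightarrow> complex^'m \<Rightarrow>
    ((complex^'n) \<times> (complex^'m)) set" where
  "orbit_pair G \<rho> \<tau> v w = {(\<rho> \<sigma> *v v, \<tau> \<sigma> *v w) | \<sigma>. \<sigma> \<in> G}"

definition elog :: "real \<Rightarrow> ereal" where
  "elog x = (if x = 0 then -\<infinity> else ereal (ln x))"

end

theory Submission
  imports Defs
begin

text \<open>Put s(\<sigma>) = \<parallel>\<sigma>w\<parallel>^2 / \<parallel>\<sigma>v\<parallel>^2 and r = inf s, so that the left-hand side is log r.
  The Fubini--Study distance from [x,y] to [x,0] is arctan (\<parallel>y\<parallel> / \<parallel>x\<parallel>), and if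
  r \<parallel>x\<parallel>^2 \<le> \<parallel>y\<parallel>^2 then every point of P(V) is at distance at least arctan \<surd>r from [x,y].
  The closure of G[v,w] lies in the closed cone r \<parallel>x\<parallel>^2 \<le> \<parallel>y\<parallel>^2 and the closure of
  G[v,0] lies in P(V), so the two closures are at distance at least arctan \<surd>r, while the pairs
  [\<sigma>v,\<sigma>w], [\<sigma>v,0] show that this bound is the infimum.  Hence tan^2 d = r.\<close>

section \<open>Hermitian forms\<close>

lemma herm_zero_left [simp]: "herm H 0 y = 0"
  by (simp add: herm_def)

lemma herm_zero_right [simp]: "herm H x 0 = 0"
  by (simp add: herm_def)

lemma herm_diff_left: "herm H (x - y) z = herm H x z - herm H y z"
  by (simp add: herm_def algebra_simps sum_subtractf)

lemma herm_diff_right: "herm H x (y - z) = herm H x y - herm H x z"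
  by (simp add: herm_def algebra_simps sum_subtractf)

lemma herm_scale_left: "herm H (c *s x) y = cnj c * herm H x y"
  by (simp add: herm_def sum_distrib_left algebra_simps)

lemma herm_scale_right: "herm H x (c *s y) = c * herm H x y"
  by (simp add: herm_def sum_distrib_left algebra_simps)

lemma herm_swap:
  assumes "pos_def_hermitian H"
  shows "herm H y x = cnj (herm H x y)"
proof -
  have H: "cnj (H $ i $ j) = H $ j $ i" for i j
    using assms unfolding pos_def_hermitian_def by (metis complex_cnj_cnj)
  have "cnj (herm H x y) = (\<Sum>i\<in>UNIV. \<Sum>j\<in>UNIV. cnj (y $ j) * H $ j $ i * x $ i)"
    unfolding herm_def by (simp add: H mult.commute mult.left_commute)
  also have "\<dots> = herm H y x"
    unfolding herm_def by (rule sum.swap)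
  finally show ?thesis by simp
qed

lemma herm_self_eq_hnormsq:
  assumes "pos_def_hermitian H"
  shows "herm H x x = of_real (hnormsq H x)"
proof -
  have "Im (herm H x x) = 0"
    using herm_swap[OF assms, of x x] by (metis cnj.sel(2) neg_equal_zero)
  thus ?thesis unfolding hnormsq_def by (simp add: complex_eq_iff)
qed

lemma hnormsq_zero [simp]: "hnormsq H 0 = 0"
  by (simp add: hnormsq_def)

lemma hnormsq_pos:
  assumes "pos_def_hermitian H" "x \<noteq> 0"
  shows "0 < hnormsq H x"
  using assms unfolding pos_def_hermitian_def hnormsq_def by auto

lemma hnormsq_nonneg:
  assumes "pos_def_hermitian H"
  shows "0 \<le> hnormsq H x"
  using hnormsq_pos[OF assms, of x] by (cases "x = 0") auto

lemma hnormsq_eq_0_iff: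
  assumes "pos_def_hermitian H"
  shows "hnormsq H x = 0 \<longleftrightarrow> x = 0"
  using hnormsq_pos[OF assms, of x] by (cases "x = 0") auto

lemma hnormsq_diff:
  assumes "pos_def_hermitian H"
  shows "hnormsq H (x - z) = hnormsq H x - 2 * Re (herm H x z) + hnormsq H z"
  using herm_swap[OF assms, of x z]
  by (simp add: hnormsq_def herm_diff_left herm_diff_right)

lemma hnormsq_scale: "hnormsq H (c *s x) = (cmod c)\<^sup>2 * hnormsq H x"
proof -
  have "herm H (c *s x) (c *s x) = (cnj c * c) * herm H x x"
    by (simp add: herm_scale_left herm_scale_right)
  also have "cnj c * c = of_real ((cmod c)\<^sup>2)"
    by (metis complex_norm_square mult.commute of_real_power)
  finally show ?thesis unfolding hnormsq_def by simp
qed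

lemma herm_Cauchy_Schwarz_sq:
  assumes H: "pos_def_hermitian H"
  shows "(cmod (herm H x y))\<^sup>2 \<le> hnormsq H x * hnormsq H y"
proof (cases "y = 0")
  case False
  define n where "n = hnormsq H y"
  define h where "h = herm H x y"
  define t where "t = cnj h / of_real n"
  have n: "0 < n" using hnormsq_pos[OF H False] by (simp add: n_def)
  have hyx: "herm H y x = cnj h" using herm_swap[OF H] h_def by metis
  have hyy: "herm H y y = of_real n" using herm_self_eq_hnormsq[OF H] n_def by metis
  have hh: "h * cnj h = of_real ((cmod h)\<^sup>2)"
    using complex_norm_square[of h] by (simp add: mult.commute)
  have "herm H (x - t *s y) (x - t *s y) = herm H x x - of_real ((cmod h)\<^sup>2 / n)"
    using n unfolding t_def
    by (simp add: herm_diff_left herm_diff_right herm_scale_left herm_scale_right hyx hyy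
        h_def[symmetric] hh field_simps)
  hence "hnormsq H (x - t *s y) = hnormsq H x - (cmod h)\<^sup>2 / n"
    unfolding hnormsq_def by simp
  with hnormsq_nonneg[OF H, of "x - t *s y"] n have "(cmod h)\<^sup>2 \<le> hnormsq H x * n"
    by (simp add: pos_divide_le_eq)
  thus ?thesis by (simp add: h_def n_def)
qed simp

lemma herm_Cauchy_Schwarz:
  assumes "pos_def_hermitian H"
  shows "cmod (herm H x y) \<le> sqrt (hnormsq H x) * sqrt (hnormsq H y)"
  using real_sqrt_le_mono[OF herm_Cauchy_Schwarz_sq[OF assms, of x y]]
  by (simp add: real_sqrt_mult)

definition sum_normsq :: "complex^'n^'n \<Rightarrow> complex^'m^'m \<Rightarrow>
    ((complex^'n) \<times> (complex^'m)) \<Rightarrow> real" where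
  "sum_normsq HV HW u = hnormsq HV (fst u) + hnormsq HW (snd u)"

definition scale_pair :: "complex \<Rightarrow> ((complex^'n) \<times> (complex^'m)) \<Rightarrow>
    ((complex^'n) \<times> (complex^'m))" where
  "scale_pair c u = (c *s fst u, c *s snd u)"

lemma fst_scale_pair [simp]: "fst (scale_pair c u) = c *s fst u"
  and snd_scale_pair [simp]: "snd (scale_pair c u) = c *s snd u"
  by (simp_all add: scale_pair_def)

lemma Re_sum_ip_self: "Re (sum_ip HV HW u u) = sum_normsq HV HW u"
  by (simp add: sum_ip_def sum_normsq_def hnormsq_def)

lemma sum_normsq_nonneg:
  assumes "pos_def_hermitian HV" "pos_def_hermitian HW"
  shows "0 \<le> sum_normsq HV HW u"
  using hnormsq_nonneg[OF assms(1)] hnormsq_nonneg[OF assms(2)] by (simp add: sum_normsq_def)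

lemma sum_normsq_pos:
  assumes "pos_def_hermitian HV" "pos_def_hermitian HW" "u \<noteq> 0"
  shows "0 < sum_normsq HV HW u"
proof -
  have "fst u \<noteq> 0 \<or> snd u \<noteq> 0" using assms(3) by (cases u) (auto simp: zero_prod_def)
  thus ?thesis
    using hnormsq_nonneg[OF assms(1), of "fst u"] hnormsq_nonneg[OF assms(2), of "snd u"]
      hnormsq_pos[OF assms(1), of "fst u"] hnormsq_pos[OF assms(2), of "snd u"]
    unfolding sum_normsq_def by linarith
qed

lemma sum_ip_Cauchy_Schwarz:
  assumes HV: "pos_def_hermitian HV" and HW: "pos_def_hermitian HW"
  shows "cmod (sum_ip HV HW u a) \<le> sqrt (sum_normsq HV HW u) * sqrt (sum_normsq HV HW a)"
proof -
  define x where "x = sqrt (hnormsq HV (fst u))"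
  define y where "y = sqrt (hnormsq HW (snd u))"
  define x' where "x' = sqrt (hnormsq HV (fst a))"
  define y' where "y' = sqrt (hnormsq HW (snd a))"
  have "(x * x' + y * y')\<^sup>2 \<le> (x\<^sup>2 + y\<^sup>2) * (x'\<^sup>2 + y'\<^sup>2)"
    using sum_squares_ge_zero[of "x * y' - x' * y" 0] by (simp add: power2_eq_square algebra_simps)
  hence CS2: "x * x' + y * y' \<le> sqrt (x\<^sup>2 + y\<^sup>2) * sqrt (x'\<^sup>2 + y'\<^sup>2)"
    by (metis real_le_rsqrt real_sqrt_mult)
  have "cmod (sum_ip HV HW u a) \<le> cmod (herm HV (fst u) (fst a)) + cmod (herm HW (snd u) (snd a))"
    unfolding sum_ip_def by (rule norm_triangle_ineq)
  also have "\<dots> \<le> x * x' + y * y'"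
    unfolding x_def y_def x'_def y'_def
    using herm_Cauchy_Schwarz[OF HV] herm_Cauchy_Schwarz[OF HW] by (rule add_mono)
  also note CS2
  finally show ?thesis
    using hnormsq_nonneg[OF HV] hnormsq_nonneg[OF HW]
    by (simp add: x_def y_def x'_def y'_def sum_normsq_def)
qed

lemma fs_dist_cos_bounds:
  fixes u a :: "(complex^'n) \<times> (complex^'m)"
  assumes "pos_def_hermitian HV" "pos_def_hermitian HW"
  defines "c \<equiv> cmod (sum_ip HV HW u a) /
                  (sqrt (sum_normsq HV HW u) * sqrt (sum_normsq HV HW a))"
  shows "fs_dist HV HW u a = arccos c" "0 \<le> c" "c \<le> 1"
  using sum_ip_Cauchy_Schwarz[OF assms(1,2), of u a]
    sum_normsq_nonneg[OF assms(1,2), of u] sum_normsq_nonneg[OF assms(1,2), of a]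
  by (auto simp: fs_dist_def c_def Re_sum_ip_self divide_le_eq_1)

lemma fs_dist_nonneg:
  assumes "pos_def_hermitian HV" "pos_def_hermitian HW"
  shows "0 \<le> fs_dist HV HW u a"
  using fs_dist_cos_bounds[OF assms, of u a] arccos_lbound by simp

lemma sum_normsq_residual:
  assumes HV: "pos_def_hermitian HV" and HW: "pos_def_hermitian HW" and "u \<noteq> 0" "a \<noteq> 0"
  shows "\<exists>t. sum_normsq HV HW (u - scale_pair t a)
               = sum_normsq HV HW u * (sin (fs_dist HV HW u a))\<^sup>2"
proof -
  define Nu where "Nu = sum_normsq HV HW u"
  define Na where "Na = sum_normsq HV HW a"
  define p where "p = sum_ip HV HW u a"
  define c where "c = cmod p / (sqrt Nu * sqrt Na)"
  define t where "t = cnj p / of_real Na"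
  have Nu: "0 < Nu" and Na: "0 < Na"
    using sum_normsq_pos[OF HV HW] assms(3,4) by (simp_all add: Nu_def Na_def)
  have "fs_dist HV HW u a = arccos c" and c0: "0 \<le> c" and c1: "c \<le> 1"
    using fs_dist_cos_bounds[OF HV HW, of u a] by (simp_all add: c_def p_def Nu_def Na_def)
  hence sin: "(sin (fs_dist HV HW u a))\<^sup>2 = 1 - c\<^sup>2"
    using c0 c1 by (simp add: sin_arccos power_le_one)
  have lp: "t * p = of_real ((cmod p)\<^sup>2 / Na)"
    unfolding t_def using complex_norm_square[of p] by (simp add: mult.commute)
  have l2: "(cmod t)\<^sup>2 = (cmod p)\<^sup>2 / Na\<^sup>2"
    unfolding t_def using Na by (simp add: norm_divide power_divide)
  have "sum_normsq HV HW (u - scale_pair t a) = Nu - 2 * Re (t * p) + (cmod t)\<^sup>2 * Na"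
    by (simp add: sum_normsq_def hnormsq_diff[OF HV] hnormsq_diff[OF HW] herm_scale_right
        hnormsq_scale Nu_def Na_def p_def sum_ip_def algebra_simps)
  also have "\<dots> = Nu - (cmod p)\<^sup>2 / Na"
    unfolding lp l2 using Na by (simp add: power2_eq_square field_simps)
  also have "\<dots> = Nu * (1 - c\<^sup>2)"
    using Nu Na by (simp add: c_def power_divide power_mult_distrib field_simps)
  finally show ?thesis using sin Nu_def by metis
qed

lemma proj_closure_approx:
  assumes HV: "pos_def_hermitian HV" and HW: "pos_def_hermitian HW"
    and "0 \<notin> S" "u \<in> proj_closure HV HW S" "0 < e"
  shows "\<exists>a\<in>S. \<exists>c. sum_normsq HV HW (u - scale_pair c a) \<le> sum_normsq HV HW u * e\<^sup>2"
proof -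
  obtain a where a: "a \<in> S" "fs_dist HV HW u a < e"
    using assms(4,5) unfolding proj_closure_def by blast
  have "u \<noteq> 0" "a \<noteq> 0" using assms(3,4) a(1) by (auto simp: proj_closure_def)
  then obtain c where c: "sum_normsq HV HW (u - scale_pair c a)
      = sum_normsq HV HW u * (sin (fs_dist HV HW u a))\<^sup>2"
    using sum_normsq_residual[OF HV HW] by blast
  have "\<bar>sin (fs_dist HV HW u a)\<bar> \<le> \<bar>e\<bar>"
    using abs_sin_x_le_abs_x[of "fs_dist HV HW u a"] a(2) fs_dist_nonneg[OF HV HW, of u a]
    by linarith
  hence "(sin (fs_dist HV HW u a))\<^sup>2 \<le> e\<^sup>2" by (simp add: abs_le_square_iff)
  thus ?thesis
    using c a(1) sum_normsq_pos[OF HV HW \<open>u \<noteq> 0\<close>] by (intro bexI[OF _ a(1)] exI[of _ c]) simp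
qed

section \<open>Closed cones in the projective space\<close>

definition diag_form :: "complex^'n^'n \<Rightarrow> complex^'m^'m \<Rightarrow> real \<Rightarrow> real \<Rightarrow>
    ((complex^'n) \<times> (complex^'m)) \<Rightarrow> real" where
  "diag_form HV HW \<alpha> \<beta> u = \<alpha> * hnormsq HV (fst u) + \<beta> * hnormsq HW (snd u)"

lemma diag_form_scale_pair:
  "diag_form HV HW \<alpha> \<beta> (scale_pair c u) = (cmod c)\<^sup>2 * diag_form HV HW \<alpha> \<beta> u"
  by (simp add: diag_form_def hnormsq_scale algebra_simps)

lemma diag_form_diff_le:
  fixes u d :: "(complex^'n) \<times> (complex^'m)"
  assumes HV: "pos_def_hermitian HV" and HW: "pos_def_hermitian HW"
  defines "Nu \<equiv> sum_normsq HV HW u" and "Nd \<equiv> sum_normsq HV HW d"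
  shows "diag_form HV HW \<alpha> \<beta> (u - d)
         \<le> diag_form HV HW \<alpha> \<beta> u + (\<bar>\<alpha>\<bar> + \<bar>\<beta>\<bar>) * (2 * sqrt Nu * sqrt Nd + Nd)"
proof -
  define r1 where "r1 = Re (herm HV (fst u) (fst d))"
  define r2 where "r2 = Re (herm HW (snd u) (snd d))"
  have "\<bar>r1\<bar> \<le> sqrt (hnormsq HV (fst u)) * sqrt (hnormsq HV (fst d))"
    unfolding r1_def using herm_Cauchy_Schwarz[OF HV] abs_Re_le_cmod order_trans by blast
  also have "\<dots> \<le> sqrt Nu * sqrt Nd"
    using hnormsq_nonneg[OF HV] hnormsq_nonneg[OF HW]
    by (intro mult_mono) (auto simp: Nu_def Nd_def sum_normsq_def)
  finally have r1: "\<bar>r1\<bar> \<le> sqrt Nu * sqrt Nd" .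
  have "\<bar>r2\<bar> \<le> sqrt (hnormsq HW (snd u)) * sqrt (hnormsq HW (snd d))"
    unfolding r2_def using herm_Cauchy_Schwarz[OF HW] abs_Re_le_cmod order_trans by blast
  also have "\<dots> \<le> sqrt Nu * sqrt Nd"
    using hnormsq_nonneg[OF HV] hnormsq_nonneg[OF HW]
    by (intro mult_mono) (auto simp: Nu_def Nd_def sum_normsq_def)
  finally have r2: "\<bar>r2\<bar> \<le> sqrt Nu * sqrt Nd" .
  have d: "0 \<le> hnormsq HV (fst d)" "0 \<le> hnormsq HW (snd d)"
    "hnormsq HV (fst d) + hnormsq HW (snd d) = Nd"
    using hnormsq_nonneg[OF HV] hnormsq_nonneg[OF HW] by (auto simp: Nd_def sum_normsq_def)
  have "\<bar>2 * \<alpha> * r1\<bar> \<le> 2 * \<bar>\<alpha>\<bar> * (sqrt Nu * sqrt Nd)"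
    using r1 by (simp add: abs_mult mult_left_mono)
  moreover have "\<bar>2 * \<beta> * r2\<bar> \<le> 2 * \<bar>\<beta>\<bar> * (sqrt Nu * sqrt Nd)"
    using r2 by (simp add: abs_mult mult_left_mono)
  moreover have "\<bar>\<alpha> * hnormsq HV (fst d)\<bar> \<le> \<bar>\<alpha>\<bar> * Nd"
    using d by (simp add: abs_mult mult_left_mono)
  moreover have "\<bar>\<beta> * hnormsq HW (snd d)\<bar> \<le> \<bar>\<beta>\<bar> * Nd"
    using d by (simp add: abs_mult mult_left_mono)
  moreover have "diag_form HV HW \<alpha> \<beta> (u - d) = diag_form HV HW \<alpha> \<beta> u
      - 2 * \<alpha> * r1 + \<alpha> * hnormsq HV (fst d) - 2 * \<beta> * r2 + \<beta> * hnormsq HW (snd d)"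
    by (simp add: diag_form_def hnormsq_diff[OF HV] hnormsq_diff[OF HW] r1_def r2_def
        algebra_simps)
  ultimately show ?thesis by (simp add: algebra_simps abs_le_iff)
qed

lemma proj_closure_diag_form_nonneg:
  assumes HV: "pos_def_hermitian HV" and HW: "pos_def_hermitian HW"
    and S: "0 \<notin> S" "\<And>a. a \<in> S \<Longrightarrow> 0 \<le> diag_form HV HW \<alpha> \<beta> a"
    and u: "u \<in> proj_closure HV HW S"
  shows "0 \<le> diag_form HV HW \<alpha> \<beta> u"
proof -
  define Q where "Q = diag_form HV HW \<alpha> \<beta>"
  define K where "K = \<bar>\<alpha>\<bar> + \<bar>\<beta>\<bar>"
  define Nu where "Nu = sum_normsq HV HW u"
  have K: "0 \<le> K" and Nu: "0 \<le> Nu"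
    using sum_normsq_nonneg[OF HV HW] by (simp_all add: K_def Nu_def)
  have approx: "0 \<le> Q u + K * (2 * Nu * e + Nu * e\<^sup>2)" if e: "0 < e" for e
  proof -
    obtain a c where a: "a \<in> S" and Nd: "sum_normsq HV HW (u - scale_pair c a) \<le> Nu * e\<^sup>2"
      using proj_closure_approx[OF HV HW S(1) u e] Nu_def by blast
    define Nd where "Nd = sum_normsq HV HW (u - scale_pair c a)"
    have "sqrt Nd \<le> sqrt (Nu * e\<^sup>2)" using Nd Nd_def by simp
    also have "\<dots> = sqrt Nu * e" using e by (simp add: real_sqrt_mult)
    finally have "sqrt Nd \<le> sqrt Nu * e" .
    hence "sqrt Nu * sqrt Nd \<le> sqrt Nu * (sqrt Nu * e)" by (rule mult_left_mono) (simp add: Nu)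
    also have "\<dots> = Nu * e" using Nu by (simp add: mult.assoc[symmetric])
    finally have "sqrt Nu * sqrt Nd \<le> Nu * e" .
    hence bound: "2 * sqrt Nu * sqrt Nd + Nd \<le> 2 * Nu * e + Nu * e\<^sup>2"
      using Nd Nd_def by linarith
    have "0 \<le> (cmod c)\<^sup>2 * Q a" using S(2)[OF a] by (simp add: Q_def)
    also have "\<dots> = Q (u - (u - scale_pair c a))" by (simp add: Q_def diag_form_scale_pair)
    also have "\<dots> \<le> Q u + K * (2 * sqrt Nu * sqrt Nd + Nd)"
      unfolding Q_def K_def Nu_def Nd_def by (rule diag_form_diff_le[OF HV HW])
    also have "\<dots> \<le> Q u + K * (2 * Nu * e + Nu * e\<^sup>2)"
      using K bound by (intro add_left_mono mult_left_mono)
    finally show ?thesis .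
  qed
  have "((\<lambda>e. Q u + K * (2 * Nu * e + Nu * e\<^sup>2)) \<longlongrightarrow> Q u + K * (2 * Nu * 0 + Nu * 0\<^sup>2))
        (at_right 0)"
    by (intro tendsto_intros)
  moreover have "eventually (\<lambda>e. 0 \<le> Q u + K * (2 * Nu * e + Nu * e\<^sup>2)) (at_right 0)"
    using approx by (intro eventually_at_rightI[of 0 1]) auto
  ultimately have "0 \<le> Q u + K * (2 * Nu * 0 + Nu * 0\<^sup>2)"
    by (rule tendsto_lowerbound) simp
  thus ?thesis by (simp add: Q_def)
qed

lemma matrix_inv_left_right:
  fixes A :: "complex^'a^'a"
  assumes "det A \<noteq> 0"
  shows "matrix_inv A ** A = mat 1" "A ** matrix_inv A = mat 1"
  using someI_ex[OF assms[folded invertible_det_nz, unfolded invertible_def]]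
  by (simp_all add: matrix_inv_def)

lemma det_matrix_inv:
  fixes A :: "complex^'a^'a"
  assumes "det A \<noteq> 0"
  shows "det (matrix_inv A) * det A = 1"
  using arg_cong[OF matrix_inv_left_right(1)[OF assms], of det] by (simp add: det_mul det_I)

lemma classical_subgroup_one: "classical_subgroup G \<Longrightarrow> mat 1 \<in> G"
  unfolding classical_subgroup_def GLc_def SLc_def SOc_def Spc_def
  by (auto simp: det_I transpose_mat matrix_mul_lid matrix_mul_rid)

lemma classical_subgroup_left_inverse:
  assumes "classical_subgroup G" "\<sigma> \<in> G"
  shows "\<exists>\<sigma>'\<in>G. \<sigma>' ** \<sigma> = mat 1"
  using assms(1) unfolding classical_subgroup_def
proof (elim disjE exE conjE)
  assume G: "G = GLc"
  hence d: "det \<sigma> \<noteq> 0" using assms(2) by (simp add: GLc_def)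
  hence "det (matrix_inv \<sigma>) \<noteq> 0" using det_matrix_inv[OF d] by auto
  thus ?thesis using G matrix_inv_left_right(1)[OF d] by (auto simp: GLc_def)
next
  assume G: "G = SLc"
  hence d: "det \<sigma> = 1" using assms(2) by (simp add: SLc_def)
  hence "det (matrix_inv \<sigma>) = 1" using det_matrix_inv[of \<sigma>] by simp
  thus ?thesis using G d matrix_inv_left_right(1)[of \<sigma>] by (auto simp: SLc_def)
next
  assume G: "G = SOc"
  hence o: "transpose \<sigma> ** \<sigma> = mat 1" and d: "det \<sigma> = 1"
    using assms(2) by (auto simp: SOc_def)
  have "transpose (transpose \<sigma>) ** transpose \<sigma> = mat 1"
    using matrix_left_right_inverse1[OF o] by (simp add: transpose_transpose)
  moreover have "det (transpose \<sigma>) = 1" using d by (simp add: det_transpose)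
  ultimately show ?thesis using G o by (auto simp: SOc_def)
next
  fix J
  assume G: "G = Spc J" and J: "det J \<noteq> 0"
  hence Sp: "transpose \<sigma> ** J ** \<sigma> = J" using assms(2) by (simp add: Spc_def)
  have "det J = det \<sigma> * det J * det \<sigma>"
    using arg_cong[OF Sp, of det] by (simp add: det_mul det_transpose)
  hence d: "det \<sigma> \<noteq> 0" using J by auto
  define \<sigma>' where "\<sigma>' = matrix_inv \<sigma>"
  have "transpose \<sigma>' ** J ** \<sigma>' = transpose \<sigma>' ** (transpose \<sigma> ** J ** \<sigma>) ** \<sigma>'"
    by (simp add: Sp)
  also have "\<dots> = transpose (\<sigma> ** \<sigma>') ** J ** (\<sigma> ** \<sigma>')"
    by (simp add: matrix_transpose_mul matrix_mul_assoc)
  also have "\<dots> = J"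
    using matrix_inv_left_right(2)[OF d] by (simp add: \<sigma>'_def transpose_mat matrix_mul_lid matrix_mul_rid)
  finally show ?thesis using G matrix_inv_left_right(1)[OF d] by (auto simp: Spc_def \<sigma>'_def)
qed

lemma rational_rep_mult_nonzero:
  assumes "classical_subgroup G" "rational_rep G \<rho>" "\<sigma> \<in> G" "v \<noteq> 0"
  shows "\<rho> \<sigma> *v v \<noteq> 0"
proof
  assume "\<rho> \<sigma> *v v = 0"
  obtain \<sigma>' where "\<sigma>' \<in> G" "\<sigma>' ** \<sigma> = mat 1"
    using classical_subgroup_left_inverse[OF assms(1,3)] by blast
  hence "\<rho> \<sigma>' ** \<rho> \<sigma> = mat 1"
    using assms(2,3) unfolding rational_rep_def by metis
  hence "v = \<rho> \<sigma>' *v (\<rho> \<sigma> *v v)" by (simp add: matrix_vector_mul_assoc matrix_vector_mul_lid)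
  also have "\<dots> = 0" by (simp add: \<open>\<rho> \<sigma> *v v = 0\<close>)
  finally show False using assms(4) by simp
qed

section \<open>Fubini--Study distances to the first summand\<close>

lemma arccos_inverse_sqrt_eq_arctan:
  assumes "0 \<le> s"
  shows "arccos (1 / sqrt (1 + s)) = arctan (sqrt s)"
proof -
  have "1 / sqrt (1 + s) = cos (arctan (sqrt s))" using assms by (simp add: cos_arctan)
  moreover have "0 \<le> arctan (sqrt s)" "arctan (sqrt s) \<le> pi"
    using assms arctan_ubound[of "sqrt s"] pi_gt_zero by (simp add: zero_le_arctan_iff, linarith)
  ultimately show ?thesis by (simp add: arccos_cos)
qed

lemma proj_closure_subset:
  assumes HV: "pos_def_hermitian HV" and HW: "pos_def_hermitian HW"
  shows "S - {0} \<subseteq> proj_closure HV HW S"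
proof
  fix a assume a: "a \<in> S - {0}"
  have N: "0 < sum_normsq HV HW a" using sum_normsq_pos[OF HV HW] a by simp
  have "sum_ip HV HW a a = of_real (sum_normsq HV HW a)"
    by (simp add: sum_ip_def sum_normsq_def herm_self_eq_hnormsq[OF HV] herm_self_eq_hnormsq[OF HW])
  hence "fs_dist HV HW a a = 0" using N by (simp add: fs_dist_def Re_sum_ip_self)
  thus "a \<in> proj_closure HV HW S" using a unfolding proj_closure_def by force
qed

lemma fs_dist_Pair_zero:
  assumes HV: "pos_def_hermitian HV" and HW: "pos_def_hermitian HW" and "x \<noteq> 0"
  shows "fs_dist HV HW (x, y) (x, 0) = arctan (sqrt (hnormsq HW y / hnormsq HV x))"
proof -
  define a where "a = hnormsq HV x"
  define b where "b = hnormsq HW y"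
  have a: "0 < a" using hnormsq_pos[OF HV assms(3)] by (simp add: a_def)
  have b: "0 \<le> b" using hnormsq_nonneg[OF HW] by (simp add: b_def)
  have "fs_dist HV HW (x, y) (x, 0) = arccos (a / (sqrt (a + b) * sqrt a))"
    by (simp add: fs_dist_def sum_ip_def herm_self_eq_hnormsq[OF HV] hnormsq_def[symmetric]
        a_def b_def abs_of_nonneg hnormsq_nonneg[OF HV])
  also have "a / (sqrt (a + b) * sqrt a) = 1 / sqrt (1 + b / a)"
  proof -
    have "a / (sqrt (a + b) * sqrt a) = (sqrt a * sqrt a) / (sqrt (a + b) * sqrt a)"
      using a by (metis real_sqrt_mult_self abs_of_pos)
    also have "\<dots> = sqrt a / sqrt (a + b)"
      using a by (simp only: mult_divide_mult_cancel_right real_sqrt_eq_zero_cancel_iff)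
    also have "(a + b) / a = 1 + b / a" using a by (simp add: field_simps)
    hence "sqrt a / sqrt (a + b) = 1 / sqrt (1 + b / a)" by (metis real_sqrt_divide divide_divide_eq_right div_by_1 divide_inverse_commute inverse_eq_divide)
    finally show ?thesis .
  qed
  also have "arccos \<dots> = arctan (sqrt (b / a))"
    using a b by (simp add: arccos_inverse_sqrt_eq_arctan)
  finally show ?thesis by (simp add: a_def b_def)
qed

lemma arctan_le_fs_dist:
  assumes HV: "pos_def_hermitian HV" and HW: "pos_def_hermitian HW"
    and "0 \<le> r" "u \<noteq> 0" "b \<noteq> 0"
    and u: "r * hnormsq HV (fst u) \<le> hnormsq HW (snd u)" and b: "snd b = 0"
  shows "arctan (sqrt r) \<le> fs_dist HV HW u b"
proof -
  define Nu where "Nu = sum_normsq HV HW u"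
  define hx where "hx = hnormsq HV (fst u)"
  define hx' where "hx' = hnormsq HV (fst b)"
  have "fst b \<noteq> 0" using assms(5) b by (cases b) (simp add: zero_prod_def)
  hence hx': "0 < hx'" using hnormsq_pos[OF HV] by (simp add: hx'_def)
  have hx: "0 \<le> hx" using hnormsq_nonneg[OF HV] by (simp add: hx_def)
  have Nu: "0 < Nu" using sum_normsq_pos[OF HV HW assms(4)] by (simp add: Nu_def)
  have Nu_ge: "(1 + r) * hx \<le> Nu" using u by (simp add: Nu_def sum_normsq_def hx_def algebra_simps)
  define c where "c = cmod (sum_ip HV HW u b) / (sqrt Nu * sqrt hx')"
  have "fs_dist HV HW u b = arccos c" and c0: "0 \<le> c"
    using fs_dist_cos_bounds[OF HV HW, of u b] b
    by (simp_all add: c_def Nu_def hx'_def sum_normsq_def)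
  have "cmod (sum_ip HV HW u b) \<le> sqrt hx * sqrt hx'"
    using herm_Cauchy_Schwarz[OF HV] b by (simp add: sum_ip_def hx_def hx'_def)
  hence "c \<le> sqrt hx / sqrt Nu"
    using Nu hx' by (simp add: c_def divide_le_eq field_simps)
  also have "\<dots> \<le> 1 / sqrt (1 + r)"
  proof -
    have "sqrt (1 + r) * sqrt hx \<le> sqrt Nu" using Nu_ge by (simp add: real_sqrt_mult[symmetric])
    thus ?thesis using Nu \<open>0 \<le> r\<close> by (simp add: field_simps)
  qed
  finally have "arccos (1 / sqrt (1 + r)) \<le> arccos c"
    using c0 \<open>0 \<le> r\<close> by (intro arccos_le_arccos) auto
  thus ?thesis using \<open>fs_dist HV HW u b = arccos c\<close> arccos_inverse_sqrt_eq_arctan[OF \<open>0 \<le> r\<close>]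
    by simp
qed

lemma arctan_sqrt_INF:
  fixes f :: "'a \<Rightarrow> real"
  assumes "A \<noteq> {}" "bdd_below (f ` A)"
  shows "arctan (sqrt (INF x\<in>A. f x)) = (INF x\<in>A. arctan (sqrt (f x)))"
proof -
  have "mono (\<lambda>t. arctan (sqrt t))"
    by (intro monoI) (simp add: arctan_le_iff real_sqrt_le_mono)
  moreover have "continuous (at_right (Inf (f ` A))) (\<lambda>t. arctan (sqrt t))"
    by (intro continuous_intros)
  ultimately show ?thesis
    using continuous_at_Inf_mono[of "\<lambda>t. arctan (sqrt t)" "f ` A"] assms
    by (simp add: image_image)
qed

lemma INF_ereal_ln:
  fixes f :: "'a \<Rightarrow> real"
  assumes "A \<noteq> {}" and pos: "\<And>x. x \<in> A \<Longrightarrow> 0 < f x"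
  shows "(INF x\<in>A. ereal (ln (f x))) = elog (INF x\<in>A. f x)"
proof -
  define r where "r = (INF x\<in>A. f x)"
  have bdd: "bdd_below (f ` A)" using pos by (intro bdd_belowI2) (auto intro: less_imp_le)
  have r0: "0 \<le> r" unfolding r_def using pos assms(1) by (intro cINF_greatest) (auto intro: less_imp_le)
  have below: "(INF x\<in>A. ereal (ln (f x))) \<le> ereal y" if "r < exp y" for y
  proof -
    have "\<exists>x\<in>A. f x < exp y"
      using that by (simp add: r_def cINF_less_iff[OF assms(1) bdd])
    then obtain x where x: "x \<in> A" "f x < exp y" ..
    hence "ln (f x) < y" using ln_less_cancel_iff[of "f x" "exp y"] pos by simp
    have "(INF x\<in>A. ereal (ln (f x))) \<le> ereal (ln (f x))" by (rule INF_lower[OF x(1)])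
    also have "\<dots> \<le> ereal y" using \<open>ln (f x) < y\<close> by simp
    finally show ?thesis .
  qed
  show ?thesis
  proof (cases "r = 0")
    case True
    hence "(INF x\<in>A. ereal (ln (f x))) = - \<infinity>" by (intro ereal_bot below) simp
    thus ?thesis using True by (simp add: r_def elog_def)
  next
    case False
    hence r: "0 < r" using r0 by simp
    have "(INF x\<in>A. ereal (ln (f x))) = ereal (ln r)"
    proof (rule antisym)
      show "(INF x\<in>A. ereal (ln (f x))) \<le> ereal (ln r)"
      proof (rule ereal_le_epsilon2)
        fix e :: real assume "0 < e"
        hence "r < exp (ln r + e)" using r by (simp add: exp_add)
        thus "(INF x\<in>A. ereal (ln (f x))) \<le> ereal (ln r) + ereal e" using below by simp
      qed
      show "ereal (ln r) \<le> (INF x\<in>A. ereal (ln (f x)))"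
        using cINF_lower[OF bdd] pos r by (intro INF_greatest) (simp add: r_def)
    qed
    thus ?thesis using r by (simp add: r_def elog_def)
  qed
qed

section \<open>Orbit closures\<close>

lemma proj_closure_orbit_ratio_bound:
  assumes HV: "pos_def_hermitian HV" and HW: "pos_def_hermitian HW"
    and nz: "\<And>\<sigma>. \<sigma> \<in> G \<Longrightarrow> \<rho> \<sigma> *v v \<noteq> 0"
    and r: "\<And>\<sigma>. \<sigma> \<in> G \<Longrightarrow> r * hnormsq HV (\<rho> \<sigma> *v v) \<le> hnormsq HW (\<tau> \<sigma> *v w)"
    and u: "u \<in> proj_closure HV HW (orbit_pair G \<rho> \<tau> v w)"
  shows "r * hnormsq HV (fst u) \<le> hnormsq HW (snd u)"
proof -
  have "0 \<le> diag_form HV HW (- r) 1 u"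
  proof (rule proj_closure_diag_form_nonneg[OF HV HW _ _ u])
    show "0 \<notin> orbit_pair G \<rho> \<tau> v w"
      using nz by (auto simp: orbit_pair_def zero_prod_def)
    show "0 \<le> diag_form HV HW (- r) 1 a" if "a \<in> orbit_pair G \<rho> \<tau> v w" for a
      using that r by (auto simp: orbit_pair_def diag_form_def)
  qed
  thus ?thesis by (simp add: diag_form_def)
qed

lemma proj_closure_orbit_zero:
  assumes HV: "pos_def_hermitian HV" and HW: "pos_def_hermitian HW"
    and nz: "\<And>\<sigma>. \<sigma> \<in> G \<Longrightarrow> \<rho> \<sigma> *v v \<noteq> 0"
    and u: "u \<in> proj_closure HV HW (orbit_pair G \<rho> \<tau> v 0)"
  shows "snd u = 0"
proof -
  have "0 \<le> diag_form HV HW 0 (- 1) u"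
  proof (rule proj_closure_diag_form_nonneg[OF HV HW _ _ u])
    show "0 \<notin> orbit_pair G \<rho> \<tau> v 0"
      using nz by (auto simp: orbit_pair_def zero_prod_def)
    show "0 \<le> diag_form HV HW 0 (- 1) a" if "a \<in> orbit_pair G \<rho> \<tau> v 0" for a
      using that by (auto simp: orbit_pair_def diag_form_def)
  qed
  hence "hnormsq HW (snd u) = 0"
    using hnormsq_nonneg[OF HW, of "snd u"] by (simp add: diag_form_def)
  thus ?thesis using hnormsq_eq_0_iff[OF HW] by blast
qed

lemma fs_setdist_orbit_closures:
  fixes \<tau> :: "complex^'k^'k \<Rightarrow> complex^'m^'m" and w :: "complex^'m"
  assumes HV: "pos_def_hermitian HV" and HW: "pos_def_hermitian HW" and "G \<noteq> {}"
    and nz: "\<And>\<sigma>. \<sigma> \<in> G \<Longrightarrow> \<rho> \<sigma> *v v \<noteq> 0"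
  defines "s \<equiv> \<lambda>\<sigma>. hnormsq HW (\<tau> \<sigma> *v w) / hnormsq HV (\<rho> \<sigma> *v v)"
  shows "fs_setdist HV HW (proj_closure HV HW (orbit_pair G \<rho> \<tau> v w))
                           (proj_closure HV HW (orbit_pair G \<rho> \<tau> v 0))
         = arctan (sqrt (INF \<sigma>\<in>G. s \<sigma>))"
proof -
  define A where "A = proj_closure HV HW (orbit_pair G \<rho> \<tau> v w)"
  define B where "B = proj_closure HV HW (orbit_pair G \<rho> \<tau> v 0)"
  define T where "T = {fs_dist HV HW a b | a b. a \<in> A \<and> b \<in> B}"
  define r where "r = (INF \<sigma>\<in>G. s \<sigma>)"
  have hk: "0 < hnormsq HV (\<rho> \<sigma> *v v)" if "\<sigma> \<in> G" for \<sigma>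
    using hnormsq_pos[OF HV nz[OF that]] .
  have s0: "0 \<le> s \<sigma>" if "\<sigma> \<in> G" for \<sigma>
    using hk[OF that] hnormsq_nonneg[OF HW] by (simp add: s_def)
  have bdd: "bdd_below (s ` G)" using s0 by (intro bdd_belowI2) auto
  have r0: "0 \<le> r" unfolding r_def using s0 \<open>G \<noteq> {}\<close> by (intro cINF_greatest) auto
  have rs: "r * hnormsq HV (\<rho> \<sigma> *v v) \<le> hnormsq HW (\<tau> \<sigma> *v w)" if "\<sigma> \<in> G" for \<sigma>
    using cINF_lower[OF bdd that] hk[OF that] by (simp add: r_def s_def pos_le_divide_eq)
  have lower: "arctan (sqrt r) \<le> t" if "t \<in> T" for t
  proof -
    obtain a b where t: "t = fs_dist HV HW a b" and a: "a \<in> A" and b: "b \<in> B"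
      using \<open>t \<in> T\<close> T_def by blast
    have "r * hnormsq HV (fst a) \<le> hnormsq HW (snd a)"
      using proj_closure_orbit_ratio_bound[OF HV HW nz rs] a by (simp add: A_def)
    moreover have "snd b = 0" using proj_closure_orbit_zero[OF HV HW nz] b by (simp add: B_def)
    moreover have "a \<noteq> 0" "b \<noteq> 0" using a b by (simp_all add: A_def B_def proj_closure_def)
    ultimately show ?thesis unfolding t by (intro arctan_le_fs_dist[OF HV HW r0])
  qed
  have attained: "arctan (sqrt (s \<sigma>)) \<in> T" if "\<sigma> \<in> G" for \<sigma>
  proof -
    have "(\<rho> \<sigma> *v v, \<tau> \<sigma> *v w) \<in> A" "(\<rho> \<sigma> *v v, 0) \<in> B"
      using proj_closure_subset[OF HV HW] that nz[OF that]
      by (fastforce simp: A_def B_def orbit_pair_def zero_prod_def)+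
    hence "fs_dist HV HW (\<rho> \<sigma> *v v, \<tau> \<sigma> *v w) (\<rho> \<sigma> *v v, 0) \<in> T"
      unfolding T_def by blast
    thus ?thesis using fs_dist_Pair_zero[OF HV HW nz[OF that]] by (simp add: s_def)
  qed
  have "Inf T = arctan (sqrt r)"
  proof (rule antisym)
    have "bdd_below T" using lower by (rule bdd_belowI)
    hence "Inf T \<le> (INF \<sigma>\<in>G. arctan (sqrt (s \<sigma>)))"
      using attained \<open>G \<noteq> {}\<close> by (intro cINF_greatest cInf_lower) auto
    thus "Inf T \<le> arctan (sqrt r)" using arctan_sqrt_INF[OF \<open>G \<noteq> {}\<close> bdd] by (simp add: r_def)
    show "arctan (sqrt r) \<le> Inf T" using attained \<open>G \<noteq> {}\<close> lower by (intro cInf_greatest) auto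
  qed
  thus ?thesis by (simp add: fs_setdist_def A_def B_def T_def r_def)
qed

theorem corollary4p4:
  fixes G :: "(complex^'k^'k) set"
    and \<rho> :: "complex^'k^'k \<Rightarrow> complex^'n^'n"
    and \<tau> :: "complex^'k^'k \<Rightarrow> complex^'m^'m"
    and HV :: "complex^'n^'n" and HW :: "complex^'m^'m"
    and v :: "complex^'n" and w :: "complex^'m"
  assumes "classical_subgroup G"
    and "rational_rep G \<rho>" and "rational_rep G \<tau>"
    and "pos_def_hermitian HV" and "pos_def_hermitian HW"
    and "v \<noteq> 0" and "w \<noteq> 0"
  shows "(INF \<sigma>\<in>G. ereal (ln (hnormsq HW (\<tau> \<sigma> *v w)) - ln (hnormsq HV (\<rho> \<sigma> *v v))))
         = elog ((tan (fs_setdist HV HW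
                          (proj_closure HV HW (orbit_pair G \<rho> \<tau> v w))
                          (proj_closure HV HW (orbit_pair G \<rho> \<tau> v 0)))) ^ 2)"
proof -
  define s where "s \<sigma> = hnormsq HW (\<tau> \<sigma> *v w) / hnormsq HV (\<rho> \<sigma> *v v)" for \<sigma>
  have "G \<noteq> {}" using classical_subgroup_one[OF assms(1)] by blast
  have nz: "\<rho> \<sigma> *v v \<noteq> 0" "\<tau> \<sigma> *v w \<noteq> 0" if "\<sigma> \<in> G" for \<sigma>
    using rational_rep_mult_nonzero assms that by blast+
  have pos: "0 < hnormsq HV (\<rho> \<sigma> *v v)" "0 < hnormsq HW (\<tau> \<sigma> *v w)" if "\<sigma> \<in> G" for \<sigma>
    using hnormsq_pos assms(4,5) nz[OF that] by blast+
  have "(INF \<sigma>\<in>G. ereal (ln (hnormsq HW (\<tau> \<sigma> *v w)) - ln (hnormsq HV (\<rho> \<sigma> *v v))))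
        = (INF \<sigma>\<in>G. ereal (ln (s \<sigma>)))"
  proof (rule INF_cong[OF refl])
    fix \<sigma> assume "\<sigma> \<in> G"
    thus "ereal (ln (hnormsq HW (\<tau> \<sigma> *v w)) - ln (hnormsq HV (\<rho> \<sigma> *v v))) = ereal (ln (s \<sigma>))"
      using pos[OF \<open>\<sigma> \<in> G\<close>] by (simp add: s_def ln_div)
  qed
  also have "\<dots> = elog (INF \<sigma>\<in>G. s \<sigma>)"
    using pos by (intro INF_ereal_ln \<open>G \<noteq> {}\<close>) (simp add: s_def)
  also have "(INF \<sigma>\<in>G. s \<sigma>) = (tan (arctan (sqrt (INF \<sigma>\<in>G. s \<sigma>))))\<^sup>2"
    using pos hnormsq_nonneg[OF assms(5)] \<open>G \<noteq> {}\<close>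
    by (simp add: tan_arctan cINF_greatest s_def less_imp_le)
  finally show ?thesis
    using fs_setdist_orbit_closures[OF assms(4,5) \<open>G \<noteq> {}\<close> nz(1)] by (simp add: s_def)
qed

end
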